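(* Consider the two-agent zero-sum dynamic game described in the context (dynamics constraints only). Fix $t\in\{1,\dots,K-1\}$ and a state/control trajectory $(x_{1:K+1},u^1_{1:K},u^2_{1:K})$ generated by differentiable feedback policies $\pi^1_s,\pi^2_s$. Suppose that, for each agent $i\in\{1,2\}$, there are multipliers $\lambda^i_s$ ($s\in T_t$) and $\psi^i_s$ ($s\in T_{t+1}$) such that the time-$t$ feedback first-order conditions (FB1)–(FB6) hold for agent $i$ along this trajectory. Then necessarily $$\lambda^{-i}_s=-\lambda^i_s\quad\text{for all } s\in T_t,\qquad \psi^1_s=\psi^2_s=0\quad\text{for all } s\in T_{t+1}.$$ In particular, at any local FBNE the constraints forcing the other agent to follow its feedback policy have zero multipliers for both agents.
   Context: Two-agent zero-sum discrete-time dynamic game with horizon $K\in\mathbb N$. States $x_t\in\mathbb R^n$ ($t=1,\dots,K+1$), with known initial state $x_1$; controls $u^i_t\in\mathbb R^{m_i}$, $i\in\{1,2\}$, $t=1,\dots,K$. Dynamics $x_{t+1}=f_t(x_t,u^1_t,u^2_t)$ with $f_t$ smooth (possibly nonlinear). Agent 1 has stage costs $\ell_t(x_t,u^1_t,u^2_t)$ ($t\le K$) and terminal cost $\ell_{K+1}(x_{K+1})$; write $\ell^1_t=\ell_t$ and $\ell^2_t=-\ell_t$ (agent 2 minimizes the negative), costs sufficiently smooth (possibly nonconvex). For agent $i$, $-i$ denotes the other agent, and $\ell^i_t(x_t,u^i_t,u^{-i}_t)$, $f_t(x_t,u^i_t,u^{-i}_t)$ denote the same functions with arguments reordered. $T_t:=\{t,t+1,\dots,K\}$.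 Jacobians are denoted $\nabla$; all derivatives are evaluated along the trajectory. Feedback first-order conditions for agent $i$ at time $t$ (the KKT conditions of agent $i$'s problem of minimizing $\sum_{s=t}^K\ell^i_s+\ell^i_{K+1}$ over $u^i_{t:K}$, $u^{-i}_{t+1:K}$, $x_{t+1:K+1}$ subject to the dynamics for $s\in T_t$ and $u^{-i}_s=\pi^{-i}_s(x_s)$ for $s\in T_{t+1}$, with multipliers $\lambda^i_s$ for dynamics and $\psi^i_s$ for policy constraints): (FB1) $\nabla_{u^{-i}_s}\ell^i_s+(\nabla_{u^{-i}_s}f_s)^\top\lambda^i_s-\psi^i_s=0$, $s\in T_{t+1}$; (FB2) $\nabla_{u^i_s}\ell^i_s+(\nabla_{u^i_s}f_s)^\top\lambda^i_s=0$, $s\in T_t$; (FB3) $\nabla_{x_{K+1}}\ell^i_{K+1}-\lambda^i_K=0$; (FB4) $x_{s+1}=f_s(x_s,u^i_s,u^{-i}_s)$, $s\in T_t$; (FB5) $u^{-i}_s=\pi^{-i}_s(x_s)$, $s\in T_{t+1}$; (FB6) $\nabla_{x_s}\ell^i_s-\lambda^i_{s-1}+(\nabla_{x_s}f_s)^\top\lambda^i_s+(\nabla_{x_s}\pi^{-i}_s)^\top\psi^i_s=0$, $s\in T_{t+1}$. *)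

theory Defs
  imports "HOL-Analysis.Analysis"
begin

definition jacobian :: "(real^'a \<Rightarrow> real^'b) \<Rightarrow> real^'a \<Rightarrow> real^'a^'b" where
  "jacobian F z = matrix (frechet_derivative F (at z))"

definition gradient :: "(real^'a \<Rightarrow> real) \<Rightarrow> real^'a \<Rightarrow> real^'a" where
  "gradient g z = (\<chi> j. frechet_derivative g (at z) (axis j 1))"

text \<open>Arguments: horizon K, time t, the agent's stage costs l s x ui uo and terminal
  cost lT, the dynamics f s x ui uo (arguments ordered as (x, own control,
  other's control)), the other agent's policies piO, the trajectory x, own
  controls ui, other's controls uo, multipliers lam (dynamics) and psi
  (policy constraints).\<close>

definition FB_conditions ::
  "nat \<Rightarrow> nat \<Rightarrow> (nat \<Rightarrow> real^'n \<Rightarrow> real^'a \<Rightarrow> real^'b \<Rightarrow> real) \<Rightarrow> (real^'n \<Rightarrow> real)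
   \<Rightarrow> (nat \<Rightarrow> real^'n \<Rightarrow> real^'a \<Rightarrow> real^'b \<Rightarrow> real^'n) \<Rightarrow> (nat \<Rightarrow> real^'n \<Rightarrow> real^'b)
   \<Rightarrow> (nat \<Rightarrow> real^'n) \<Rightarrow> (nat \<Rightarrow> real^'a) \<Rightarrow> (nat \<Rightarrow> real^'b)
   \<Rightarrow> (nat \<Rightarrow> real^'n) \<Rightarrow> (nat \<Rightarrow> real^'b) \<Rightarrow> bool" where
  "FB_conditions K t l lT f piO x ui uo lam psi \<longleftrightarrow>
     \<comment> \<open>(FB1)\<close>
     (\<forall>s\<in>{t+1..K}.
        gradient (\<lambda>v. l s (x s) (ui s) v) (uo s)
        + transpose (jacobian (\<lambda>v. f s (x s) (ui s) v) (uo s)) *v lam s - psi s = 0) \<and>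
     \<comment> \<open>(FB2)\<close>
     (\<forall>s\<in>{t..K}.
        gradient (\<lambda>v. l s (x s) v (uo s)) (ui s)
        + transpose (jacobian (\<lambda>v. f s (x s) v (uo s)) (ui s)) *v lam s = 0) \<and>
     \<comment> \<open>(FB3)\<close>
     (gradient lT (x (K+1)) - lam K = 0) \<and>
     \<comment> \<open>(FB4)\<close>
     (\<forall>s\<in>{t..K}. x (s+1) = f s (x s) (ui s) (uo s)) \<and>
     \<comment> \<open>(FB5)\<close>
     (\<forall>s\<in>{t+1..K}. uo s = piO s (x s)) \<and>
     \<comment> \<open>(FB6)\<close>
     (\<forall>s\<in>{t+1..K}.
        gradient (\<lambda>y. l s y (ui s) (uo s)) (x s) - lam (s - 1)
        + transpose (jacobian (\<lambda>y. f s y (ui s) (uo s)) (x s)) *v lam s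
        + transpose (jacobian (piO s) (x s)) *v psi s = 0)"

end

theory Submission
  imports Defs
begin

text \<open>Agent 2's first-order conditions are agent 1's with every cost gradient negated. So once
  \<open>lam2 s = - lam1 s\<close> is known, adding agent 1's (FB2) at \<open>s\<close> to agent 2's (FB1) forces
  \<open>psi2 s = 0\<close> (symmetrically \<open>psi1 s = 0\<close>), and adding the two copies of (FB6) then gives
  \<open>lam2 (s - 1) = - lam1 (s - 1)\<close>. Starting from (FB3) at \<open>K\<close>, backward induction covers all of
  \<open>{t..K}\<close>. The argument is purely algebraic: of the hypotheses on dynamics and policies none is
  needed, and differentiability of the costs only serves to negate their gradients.\<close>

lemma gradient_uminus:
  assumes "g differentiable (at z)"
  shows "gradient (\<lambda>v. - g v) z = - gradient g z"
proof -
  have "(g has_derivative frechet_derivative g (at z)) (at z)"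
    using assms frechet_derivative_works by blast
  then have "((\<lambda>v. - g v) has_derivative (\<lambda>h. - frechet_derivative g (at z) h)) (at z)"
    by (rule has_derivative_minus)
  then have "frechet_derivative (\<lambda>v. - g v) (at z) = (\<lambda>h. - frechet_derivative g (at z) h)"
    by (metis frechet_derivative_at)
  then show ?thesis
    unfolding gradient_def by (simp add: vec_eq_iff)
qed

lemma differentiable_at_partials3:
  fixes L :: "'x::real_normed_vector \<Rightarrow> 'y::real_normed_vector \<Rightarrow> 'z::real_normed_vector \<Rightarrow> real"
  assumes L: "\<And>w. (\<lambda>(y, a, b). L y a b) differentiable (at w)"
  shows "(\<lambda>v. L v a b) differentiable (at y)"
    and "(\<lambda>v. L y v b) differentiable (at a)"
    and "(\<lambda>v. L y a v) differentiable (at b)"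
proof -
  have "(\<lambda>v. (v, a, b)) differentiable (at y)"
    "(\<lambda>v. (y, v, b)) differentiable (at a)"
    "(\<lambda>v. (y, a, v)) differentiable (at b)"
    by (intro differentiable_Pair differentiable_const differentiable_ident)+
  from this[THEN differentiable_chain_at, OF L]
  show "(\<lambda>v. L v a b) differentiable (at y)"
    and "(\<lambda>v. L y v b) differentiable (at a)"
    and "(\<lambda>v. L y a v) differentiable (at b)"
    by (simp_all add: o_def)
qed

lemma matrix_vector_mult_uminus_right: "(A::real^'a^'b) *v (- v) = - (A *v v)"
  using matrix_vector_mult_diff_distrib[of A 0 v] by simp

lemma FB_conditions_zero_sum_terminal:
  assumes "lT differentiable (at (x (K+1)))"
    and "FB_conditions K t l lT f pi2 x u1 u2 lam1 psi1"
    and "FB_conditions K t l2 (\<lambda>z. - lT z) f2 pi1 x u2 u1 lam2 psi2"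
  shows "lam2 K = - lam1 K"
  using assms gradient_uminus[OF assms(1)] unfolding FB_conditions_def
  by (simp add: right_minus_eq)

lemma FB_conditions_zero_sum_step:
  assumes FB_agent1: "FB_conditions K t l lT f pi2 x u1 u2 lam1 psi1"
    and FB_agent2: "FB_conditions K t (\<lambda>s y a b. - l s y b a) (\<lambda>z. - lT z)
                      (\<lambda>s y a b. f s y b a) pi1 x u2 u1 lam2 psi2"
    and l_diff: "\<And>w. (\<lambda>(y, a, b). l s y a b) differentiable (at w)"
    and s: "s \<in> {t+1..K}"
    and lam_s: "lam2 s = - lam1 s"
  shows "psi1 s = 0" and "psi2 s = 0" and "lam2 (s - 1) = - lam1 (s - 1)"
proof -
  have s': "s \<in> {t..K}" using s by simp
  define gx gu1 gu2 where
    "gx = gradient (\<lambda>y. l s y (u1 s) (u2 s)) (x s)" and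
    "gu1 = gradient (\<lambda>v. l s (x s) v (u2 s)) (u1 s)" and
    "gu2 = gradient (\<lambda>v. l s (x s) (u1 s) v) (u2 s)"
  define Jx Ju1 Ju2 where
    "Jx = transpose (jacobian (\<lambda>y. f s y (u1 s) (u2 s)) (x s))" and
    "Ju1 = transpose (jacobian (\<lambda>v. f s (x s) v (u2 s)) (u1 s))" and
    "Ju2 = transpose (jacobian (\<lambda>v. f s (x s) (u1 s) v) (u2 s))"
  note partials = differentiable_at_partials3[OF l_diff]
  have neg_grads:
    "gradient (\<lambda>y. - l s y (u1 s) (u2 s)) (x s) = - gx"
    "gradient (\<lambda>v. - l s (x s) v (u2 s)) (u1 s) = - gu1"
    "gradient (\<lambda>v. - l s (x s) (u1 s) v) (u2 s) = - gu2"
    unfolding gx_def gu1_def gu2_def by (simp_all add: gradient_uminus partials)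
  have FB1_agent1: "gu2 + Ju2 *v lam1 s - psi1 s = 0"
    and FB2_agent1: "gu1 + Ju1 *v lam1 s = 0"
    and FB6_agent1: "gx - lam1 (s - 1) + Jx *v lam1 s
                     + transpose (jacobian (pi2 s) (x s)) *v psi1 s = 0"
    using FB_agent1 s s' unfolding FB_conditions_def gx_def gu1_def gu2_def Jx_def Ju1_def Ju2_def
    by blast+
  have "gradient (\<lambda>v. - l s (x s) v (u2 s)) (u1 s) + Ju1 *v lam2 s - psi2 s = 0"
    and "gradient (\<lambda>v. - l s (x s) (u1 s) v) (u2 s) + Ju2 *v lam2 s = 0"
    and "gradient (\<lambda>y. - l s y (u1 s) (u2 s)) (x s) - lam2 (s - 1) + Jx *v lam2 s
         + transpose (jacobian (pi1 s) (x s)) *v psi2 s = 0"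
    using FB_agent2 s s' unfolding FB_conditions_def Jx_def Ju1_def Ju2_def
    by blast+
  then have FB1_agent2: "- gu1 + - (Ju1 *v lam1 s) - psi2 s = 0"
    and FB2_agent2: "- gu2 + - (Ju2 *v lam1 s) = 0"
    and FB6_agent2: "- gx - lam2 (s - 1) + - (Jx *v lam1 s)
                     + transpose (jacobian (pi1 s) (x s)) *v psi2 s = 0"
    by (simp_all only: neg_grads lam_s matrix_vector_mult_uminus_right)
  have "(gu2 + Ju2 *v lam1 s - psi1 s) + (- gu2 + - (Ju2 *v lam1 s)) = 0"
    using FB1_agent1 FB2_agent2 by simp
  then show psi1: "psi1 s = 0"
    by (simp add: algebra_simps)
  have "(gu1 + Ju1 *v lam1 s) + (- gu1 + - (Ju1 *v lam1 s) - psi2 s) = 0"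
    using FB2_agent1 FB1_agent2 by simp
  then show psi2: "psi2 s = 0"
    by (simp add: algebra_simps)
  have "(gx - lam1 (s - 1) + Jx *v lam1 s) + (- gx - lam2 (s - 1) + - (Jx *v lam1 s)) = 0"
    using FB6_agent1 FB6_agent2 psi1 psi2 by simp
  then show "lam2 (s - 1) = - lam1 (s - 1)"
    by (simp add: algebra_simps)
qed

theorem mainTheorem1:
  fixes K t :: nat
    and f :: "nat \<Rightarrow> real^'n \<Rightarrow> real^'m1 \<Rightarrow> real^'m2 \<Rightarrow> real^'n"
    and l :: "nat \<Rightarrow> real^'n \<Rightarrow> real^'m1 \<Rightarrow> real^'m2 \<Rightarrow> real"
    and lT :: "real^'n \<Rightarrow> real"
    and pi1 :: "nat \<Rightarrow> real^'n \<Rightarrow> real^'m1"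
    and pi2 :: "nat \<Rightarrow> real^'n \<Rightarrow> real^'m2"
    and x :: "nat \<Rightarrow> real^'n"
    and u1 :: "nat \<Rightarrow> real^'m1"
    and u2 :: "nat \<Rightarrow> real^'m2"
    and lam1 lam2 :: "nat \<Rightarrow> real^'n"
    and psi1 :: "nat \<Rightarrow> real^'m2"
    and psi2 :: "nat \<Rightarrow> real^'m1"
  assumes f_diff: "\<And>s z. s \<in> {1..K} \<Longrightarrow> (\<lambda>(y, a, b). f s y a b) differentiable (at z)"
    and l_diff: "\<And>s z. s \<in> {1..K} \<Longrightarrow> (\<lambda>(y, a, b). l s y a b) differentiable (at z)"
    and lT_diff: "\<And>z. lT differentiable (at z)"
    and pi1_diff: "\<And>s z. s \<in> {1..K} \<Longrightarrow> pi1 s differentiable (at z)"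
    and pi2_diff: "\<And>s z. s \<in> {1..K} \<Longrightarrow> pi2 s differentiable (at z)"
    and t_range: "1 \<le> t" "t \<le> K - 1" "1 \<le> K"
    and dyn: "\<And>s. s \<in> {1..K} \<Longrightarrow> x (s+1) = f s (x s) (u1 s) (u2 s)"
    and ctrl1: "\<And>s. s \<in> {1..K} \<Longrightarrow> u1 s = pi1 s (x s)"
    and ctrl2: "\<And>s. s \<in> {1..K} \<Longrightarrow> u2 s = pi2 s (x s)"
    and FB_agent1: "FB_conditions K t l lT f pi2 x u1 u2 lam1 psi1"
    and FB_agent2: "FB_conditions K t (\<lambda>s y a b. - l s y b a) (\<lambda>z. - lT z)
                      (\<lambda>s y a b. f s y b a) pi1 x u2 u1 lam2 psi2"
  shows "(\<forall>s\<in>{t..K}. lam2 s = - lam1 s \<and> lam1 s = - lam2 s) \<and>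
         (\<forall>s\<in>{t+1..K}. psi1 s = 0 \<and> psi2 s = 0)"
proof -
  note zero_sum_step = FB_conditions_zero_sum_step[OF FB_agent1 FB_agent2 l_diff]
  have lam: "lam2 s = - lam1 s" if "s \<le> K" "t \<le> s" for s
    using that
  proof (induction rule: inc_induct)
    case base
    show ?case by (rule FB_conditions_zero_sum_terminal[OF lT_diff FB_agent1 FB_agent2])
  next
    case (step n)
    then have "Suc n \<in> {t+1..K}" "Suc n \<in> {1..K}" and "lam2 (Suc n) = - lam1 (Suc n)"
      using \<open>1 \<le> t\<close> by auto
    with zero_sum_step(3) show ?case by fastforce
  qed
  then show ?thesis
    using zero_sum_step(1,2) by fastforce
qed

end
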